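(* Let $p$ be a positive integer and $\mathbb{K}$ a field with $\#\mathbb{K}>p$. Let $E$ be an $n$-dimensional $\mathbb{K}$-vector space and $(E_i)_{i\in I}$ a family of $(n-1)p+1$ linear subspaces of $E$ in which exactly $p+1$ subspaces have dimension $n-1$ and, for each $k\in\{1,\dots,n-2\}$, exactly $p$ subspaces have dimension $k$. Then $E\not\subset\bigcup_{i\in I}E_i$. Consequently, if $(E_i)_{i\in I}$ is a family of $(n-1)p$ linear subspaces of $E$ in which, for each $k\in\{1,\dots,n-1\}$, exactly $p$ subspaces have dimension $k$, then there exists a basis of $E$ none of whose vectors lies in $\bigcup_{i\in I}E_i$. *)

theory Defs
  imports Complex_Main
begin

end

theory Submission
  imports Defs
begin

text \<open>
  Call a family of nonzero proper subspaces of a space U sparse if it has at most p members of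
  each dimension, and assume the field has more than p elements. Two statements are proved
  together by induction on dim U:
  (A) for every hyperplane H of U, some vector of U lies outside H and outside every member;
  (B) some hyperplane of U contains no member.

  For (A), the members not contained in H and of dimension at least 2 cut H in a sparse family,
  so (B) gives a hyperplane W of H containing none of these traces. The hyperplanes of U through
  W other than H form a pencil indexed by the field, any two of which meet in W; hence each line
  of the family lies in at most one of them, and since there are at most p lines some member P
  of the pencil contains none. Applying (A) to P, its hyperplane W and the traces on P of the
  higher-dimensional members gives the vector. For (B), take a vector v given by (A) for some
  hyperplane H; joining v to the members of dimension below dim U - 1 keeps the family sparse,
  (B) in H gives a hyperplane of H avoiding the traces of the joins, and adding v to it gives the
  required hyperplane of U.

  The covering statement is (A) for the whole space, with H one of the hyperplanes of the
  family; the basis is built one vector at a time, applying (A) to a hyperplane that contains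
  the vectors chosen so far.
\<close>

lemma card_image_filter_le:
  assumes "finite A" and "\<And>x. x \<in> A \<Longrightarrow> P (f x) \<Longrightarrow> Q x"
  shows "card {y \<in> f ` A. P y} \<le> card {x \<in> A. Q x}"
proof -
  have "{y \<in> f ` A. P y} \<subseteq> f ` {x \<in> A. Q x}" using assms(2) by blast
  then have "card {y \<in> f ` A. P y} \<le> card (f ` {x \<in> A. Q x})"
    using assms(1) by (intro card_mono) auto
  also have "\<dots> \<le> card {x \<in> A. Q x}" by (rule card_image_le) (use assms(1) in auto)
  finally show ?thesis .
qed

context finite_dimensional_vector_space
begin

definition hyperplane_of :: "'b set \<Rightarrow> 'b set \<Rightarrow> bool" where
  "hyperplane_of H U \<longleftrightarrow> subspace H \<and> H \<subseteq> U \<and> dim H + 1 = dim U"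

definition sparse_family :: "nat \<Rightarrow> 'b set \<Rightarrow> 'b set set \<Rightarrow> bool" where
  "sparse_family p U \<F> \<longleftrightarrow> finite \<F>
     \<and> (\<forall>S\<in>\<F>. subspace S \<and> S \<subseteq> U \<and> 0 < dim S \<and> dim S < dim U)
     \<and> (\<forall>k. card {S\<in>\<F>. dim S = k} \<le> p)"

lemma scale_mem_subspace_iff:
  assumes "subspace S" and "a \<notin> S"
  shows "k *s a \<in> S \<longleftrightarrow> k = 0"
proof
  assume ka: "k *s a \<in> S"
  show "k = 0"
  proof (rule ccontr)
    assume "k \<noteq> 0"
    then have "a = inverse k *s (k *s a)" by simp
    with assms ka show False by (metis subspace_scale)
  qed
qed (use assms subspace_0 in simp)

lemma span_insert_Int_subspace:
  assumes A: "subspace A" and H: "subspace H" and AH: "A \<subseteq> H" and a: "a \<notin> H"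
  shows "span (insert a A) \<inter> H = A"
proof
  show "span (insert a A) \<inter> H \<subseteq> A"
  proof
    fix x assume x: "x \<in> span (insert a A) \<inter> H"
    from x obtain k where k: "x - k *s a \<in> A"
      unfolding Int_iff span_breakdown_eq span_eq_iff[THEN iffD2, OF A] by blast
    have "k *s a = x - (x - k *s a)" by simp
    also have "\<dots> \<in> H" using x k AH H by (blast intro: subspace_diff)
    finally have "k = 0" using scale_mem_subspace_iff[OF H a] by blast
    with k show "x \<in> A" by simp
  qed
  show "A \<subseteq> span (insert a A) \<inter> H" using AH by (auto intro: span_base)
qed

lemma dim_span_insert:
  assumes "subspace S" and "v \<notin> S"
  shows "dim (span (insert v S)) = dim S + 1"
proof -
  have "v \<notin> span S" unfolding span_eq_iff[THEN iffD2, OF assms(1)] by (rule assms(2))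
  then show ?thesis by (simp add: dim_insert)
qed

lemma dim_Int_hyperplane:
  assumes U: "subspace U" and S: "subspace S" and SU: "S \<subseteq> U"
    and H: "hyperplane_of H U" and SH: "\<not> S \<subseteq> H"
  shows "dim (S \<inter> H) + 1 = dim S"
proof -
  let ?sum = "{x + y |x y. x \<in> S \<and> y \<in> H}"
  have Hsub: "subspace H" and HU: "H \<subseteq> U" and dH: "dim H + 1 = dim U"
    using H by (auto simp: hyperplane_of_def)
  have sum_sub: "subspace ?sum" using subspace_sums[OF S Hsub] .
  have "H \<subseteq> ?sum" using subspace_0[OF S] by force
  moreover have "S \<subseteq> ?sum" using subspace_0[OF Hsub] by force
  ultimately have "H \<subset> ?sum" using SH by blast
  then have "span H \<subset> span ?sum"
    unfolding span_eq_iff[THEN iffD2, OF Hsub] span_eq_iff[THEN iffD2, OF sum_sub] .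
  then have "dim H < dim ?sum" by (rule dim_psubset)
  moreover have "?sum \<subseteq> U" using SU HU U by (auto intro: subspace_add)
  then have "dim ?sum \<le> dim U" by (rule dim_subset)
  ultimately have "dim ?sum = dim U" using dH by linarith
  with dim_sums_Int[OF S Hsub] dH show ?thesis by linarith
qed

lemma hyperplane_exists:
  assumes "subspace U" and "subspace S" and "S \<subseteq> U" and "dim S < dim U"
  obtains H where "hyperplane_of H U" and "S \<subseteq> H"
proof -
  have "\<exists>H. hyperplane_of H U \<and> S \<subseteq> H"
    if "subspace S" "S \<subseteq> U" "dim U = dim S + 1 + k" for S k
    using that
  proof (induction k arbitrary: S)
    case 0
    then show ?case by (auto simp: hyperplane_of_def)
  next
    case (Suc k)
    have "\<not> U \<subseteq> S" using Suc.prems dim_subset[of U S] by linarith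
    then obtain x where x: "x \<in> U" "x \<notin> S" by blast
    let ?S = "span (insert x S)"
    have "dim ?S = dim S + 1" using dim_span_insert[OF Suc.prems(1) x(2)] .
    then have "dim U = dim ?S + 1 + k" using Suc.prems(3) by simp
    moreover have "?S \<subseteq> U" using x Suc.prems assms(1) by (intro span_minimal) auto
    ultimately obtain H where "hyperplane_of H U" "?S \<subseteq> H"
      using Suc.IH[of ?S] by auto
    moreover have "S \<subseteq> ?S" by (auto intro: span_base)
    ultimately show ?case by blast
  qed
  moreover have "dim U = dim S + 1 + (dim U - dim S - 1)" using assms(4) by linarith
  ultimately show thesis using assms that by blast
qed

lemma hyperplane_span_insert:
  assumes U: "subspace U" and H: "hyperplane_of H U" and W: "hyperplane_of W H"
    and v: "v \<in> U" "v \<notin> H"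
  shows "hyperplane_of (span (insert v W)) U" and "span (insert v W) \<inter> H = W"
proof -
  from H W have Hsub: "subspace H" "H \<subseteq> U" "dim H + 1 = dim U"
    and Wsub: "subspace W" "W \<subseteq> H" "dim W + 1 = dim H"
    by (auto simp: hyperplane_of_def)
  show "span (insert v W) \<inter> H = W"
    using span_insert_Int_subspace[OF Wsub(1) Hsub(1) Wsub(2) v(2)] .
  have "v \<notin> W" using v Wsub by blast
  then have "dim (span (insert v W)) = dim W + 1" by (rule dim_span_insert[OF Wsub(1)])
  then have "dim (span (insert v W)) + 1 = dim U" using Wsub(3) Hsub(3) by linarith
  moreover have "span (insert v W) \<subseteq> U" using v Wsub Hsub U by (intro span_minimal) auto
  ultimately show "hyperplane_of (span (insert v W)) U" unfolding hyperplane_of_def by simp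
qed

lemma hyperplane_pencil:
  assumes U: "subspace U" and H: "hyperplane_of H U" and W: "hyperplane_of W H"
  shows "\<exists>P :: 'a \<Rightarrow> 'b set. (\<forall>c. hyperplane_of (P c) U \<and> P c \<inter> H = W)
    \<and> (\<forall>c d. c \<noteq> d \<longrightarrow> P c \<inter> P d = W)"
proof -
  from H W have Hsub: "subspace H" "H \<subseteq> U" "dim H + 1 = dim U"
    and Wsub: "subspace W" "W \<subseteq> H" "dim W + 1 = dim H"
    by (auto simp: hyperplane_of_def)
  have "\<not> H \<subseteq> W" using Wsub dim_subset[of H W] by linarith
  then obtain h where h: "h \<in> H" "h \<notin> W" by blast
  have "\<not> U \<subseteq> H" using Hsub dim_subset[of U H] by linarith
  then obtain u where u: "u \<in> U" "u \<notin> H" by blast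
  define P where "P c = span (insert (u + c *s h) W)" for c
  have uch: "u + c *s h \<in> U" "u + c *s h \<notin> H" for c
  proof -
    show "u + c *s h \<in> U" using u h Hsub U by (intro subspace_add subspace_scale) auto
    show "u + c *s h \<notin> H"
    proof
      assume "u + c *s h \<in> H"
      then have "(u + c *s h) - c *s h \<in> H" using h Hsub by (intro subspace_diff subspace_scale) auto
      with u show False by simp
    qed
  qed
  have hyp: "hyperplane_of (P c) U" and meet: "P c \<inter> H = W" for c
    unfolding P_def using hyperplane_span_insert[OF U H W uch] by simp_all
  have "P c \<inter> P d \<subseteq> W" if "c \<noteq> d" for c d
  proof
    fix x assume x: "x \<in> P c \<inter> P d"
    from x obtain s t where s: "x - s *s (u + c *s h) \<in> W" and t: "x - t *s (u + d *s h) \<in> W"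
      unfolding P_def Int_iff span_breakdown_eq span_eq_iff[THEN iffD2, OF Wsub(1)] by blast
    have "(s - t) *s u + (s * c - t * d) *s h = (x - t *s (u + d *s h)) - (x - s *s (u + c *s h))"
      by (simp add: algebra_simps)
    also have "\<dots> \<in> W" by (rule subspace_diff[OF Wsub(1) t s])
    finally have diff: "(s - t) *s u + (s * c - t * d) *s h \<in> W" .
    then have "(s - t) *s u + (s * c - t * d) *s h - (s * c - t * d) *s h \<in> H"
      using h Wsub Hsub by (intro subspace_diff subspace_scale) auto
    then have "s = t" using scale_mem_subspace_iff[OF Hsub(1) u(2)] by simp
    with diff have "(s * (c - d)) *s h \<in> W" by (simp add: algebra_simps)
    then have "s = 0" using scale_mem_subspace_iff[OF Wsub(1) h(2)] that by simp
    with s show "x \<in> W" by simp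
  qed
  then have inter: "P c \<inter> P d = W" if "c \<noteq> d" for c d using meet that by blast
  with hyp meet show ?thesis by blast
qed

lemma pencil_member_avoiding:
  assumes P: "\<And>c d. c \<noteq> d \<Longrightarrow> P c \<inter> P d = W"
    and L: "finite \<L>" "card \<L> \<le> p" "\<forall>S\<in>\<L>. \<not> S \<subseteq> W"
    and field: "infinite (UNIV :: 'a set) \<or> p < card (UNIV :: 'a set)"
  obtains c :: 'a where "\<forall>S\<in>\<L>. \<not> S \<subseteq> P c"
proof -
  define Bad where "Bad = (\<Union>S\<in>\<L>. {c. S \<subseteq> P c})"
  have subsingleton: "finite {c. S \<subseteq> P c} \<and> card {c. S \<subseteq> P c} \<le> 1" if "S \<in> \<L>" for S
  proof -
    have "c = d" if "S \<subseteq> P c" "S \<subseteq> P d" for c d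
      using P[of c d] that L(3) \<open>S \<in> \<L>\<close> by blast
    then have "{c. S \<subseteq> P c} = {} \<or> (\<exists>c. {c. S \<subseteq> P c} = {c})" by blast
    then show ?thesis by auto
  qed
  have fin: "finite Bad" unfolding Bad_def using L(1) subsingleton by blast
  have "card Bad \<le> (\<Sum>S\<in>\<L>. card {c. S \<subseteq> P c})"
    unfolding Bad_def by (rule card_UN_le[OF L(1)])
  also have "\<dots> \<le> (\<Sum>S\<in>\<L>. 1)" by (rule sum_mono) (use subsingleton in blast)
  also have "\<dots> \<le> p" using L(2) by simp
  finally have "card Bad \<le> p" .
  with fin field have "Bad \<noteq> UNIV" by auto
  then obtain c where "c \<notin> Bad" by blast
  then show thesis using that unfolding Bad_def by blast
qed

lemma hyperplane_through_avoiding: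
  assumes field: "infinite (UNIV :: 'a set) \<or> p < card (UNIV :: 'a set)"
    and U: "subspace U" and H: "hyperplane_of H U" and W: "hyperplane_of W H"
    and L: "finite \<L>" "card \<L> \<le> p" "\<forall>S\<in>\<L>. \<not> S \<subseteq> W"
  obtains P where "hyperplane_of P U" and "P \<inter> H = W" and "\<forall>S\<in>\<L>. \<not> S \<subseteq> P"
proof -
  from hyperplane_pencil[OF U H W] obtain P :: "'a \<Rightarrow> 'b set"
    where P: "(\<forall>c. hyperplane_of (P c) U \<and> P c \<inter> H = W)
      \<and> (\<forall>c d. c \<noteq> d \<longrightarrow> P c \<inter> P d = W)" ..
  obtain c where c: "\<forall>S\<in>\<L>. \<not> S \<subseteq> P c"
    using pencil_member_avoiding[OF P[THEN conjunct2, rule_format] L field] .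
  have "hyperplane_of (P c) U" and "P c \<inter> H = W"
    using P[THEN conjunct1, rule_format, of c] by simp_all
  then show thesis using c by (rule that)
qed

lemma sparse_family_subset:
  assumes "sparse_family p U \<F>" and "\<G> \<subseteq> \<F>"
  shows "sparse_family p U \<G>"
proof -
  have "card {S\<in>\<G>. dim S = k} \<le> card {S\<in>\<F>. dim S = k}" for k
    using assms by (intro card_mono) (auto simp: sparse_family_def)
  with assms show ?thesis unfolding sparse_family_def by (meson finite_subset le_trans subsetD)
qed

lemma sparse_family_Int_hyperplane:
  assumes U: "subspace U" and F: "sparse_family p U \<F>" and H: "hyperplane_of H U"
    and big: "\<And>S. S \<in> \<F> \<Longrightarrow> \<not> S \<subseteq> H \<and> 2 \<le> dim S"
  shows "sparse_family p H ((\<lambda>S. S \<inter> H) ` \<F>)"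
proof -
  have dim: "dim (S \<inter> H) + 1 = dim S" if "S \<in> \<F>" for S
    using dim_Int_hyperplane[OF U _ _ H] that F big by (auto simp: sparse_family_def)
  have "card {T \<in> (\<lambda>S. S \<inter> H) ` \<F>. dim T = k} \<le> card {S\<in>\<F>. dim S = k + 1}" for k
    using F dim by (intro card_image_filter_le) (auto simp: sparse_family_def)
  also have "\<dots> k \<le> p" for k using F by (simp add: sparse_family_def)
  finally have "card {T \<in> (\<lambda>S. S \<inter> H) ` \<F>. dim T = k} \<le> p" for k .
  moreover have "subspace (S \<inter> H) \<and> 0 < dim (S \<inter> H) \<and> dim (S \<inter> H) < dim H" if "S \<in> \<F>" for S
    using F H big[OF that] dim[OF that] that
    by (auto simp: sparse_family_def hyperplane_of_def intro: subspace_inter)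
  ultimately show ?thesis using F by (auto simp: sparse_family_def)
qed

lemma sparse_family_span_insert:
  assumes U: "subspace U" and F: "sparse_family p U \<F>" and v: "v \<in> U"
    and vF: "\<And>S. S \<in> \<F> \<Longrightarrow> v \<notin> S" and small: "\<And>S. S \<in> \<F> \<Longrightarrow> dim S + 1 < dim U"
  shows "sparse_family p U ((\<lambda>S. span (insert v S)) ` \<F>)"
proof -
  have dim: "dim (span (insert v S)) = dim S + 1" if "S \<in> \<F>" for S
    using dim_span_insert[OF _ vF[OF that]] F that by (simp add: sparse_family_def)
  have "card {T \<in> (\<lambda>S. span (insert v S)) ` \<F>. dim T = k} \<le> card {S\<in>\<F>. dim S = k - 1}" for k
    using F dim by (intro card_image_filter_le) (auto simp: sparse_family_def)
  also have "\<dots> k \<le> p" for k using F by (simp add: sparse_family_def)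
  finally have "card {T \<in> (\<lambda>S. span (insert v S)) ` \<F>. dim T = k} \<le> p" for k .
  moreover have "span (insert v S) \<subseteq> U" if "S \<in> \<F>" for S
    using F U v that by (intro span_minimal) (auto simp: sparse_family_def)
  ultimately show ?thesis using F dim small by (auto simp: sparse_family_def)
qed

definition point_avoidance :: "nat \<Rightarrow> nat \<Rightarrow> bool" where
  "point_avoidance p n \<longleftrightarrow> (\<forall>U H \<F>. subspace U \<longrightarrow> dim U = n \<longrightarrow> hyperplane_of H U
     \<longrightarrow> sparse_family p U \<F> \<longrightarrow> (\<exists>x\<in>U. x \<notin> H \<and> (\<forall>S\<in>\<F>. x \<notin> S)))"

definition hyperplane_avoidance :: "nat \<Rightarrow> nat \<Rightarrow> bool" where
  "hyperplane_avoidance p n \<longleftrightarrow> (\<forall>U \<F>. subspace U \<longrightarrow> dim U = n \<longrightarrow> sparse_family p U \<F>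
     \<longrightarrow> (\<exists>W. hyperplane_of W U \<and> (\<forall>S\<in>\<F>. \<not> S \<subseteq> W)))"

lemma point_avoidanceD:
  assumes "point_avoidance p n" and "subspace U" and "dim U = n" and "hyperplane_of H U"
    and "sparse_family p U \<F>"
  obtains x where "x \<in> U" and "x \<notin> H" and "\<forall>S\<in>\<F>. x \<notin> S"
  using assms(1)[unfolded point_avoidance_def, rule_format, OF assms(2-5)] by blast

lemma hyperplane_avoidanceD:
  assumes "hyperplane_avoidance p n" and "subspace U" and "dim U = n" and "sparse_family p U \<F>"
  obtains W where "hyperplane_of W U" and "\<forall>S\<in>\<F>. \<not> S \<subseteq> W"
  using assms(1)[unfolded hyperplane_avoidance_def, rule_format, OF assms(2-4)] by blast

lemma sparse_family_dim_1:
  assumes "dim U = 1" and "sparse_family p U \<F>"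
  shows "\<F> = {}"
proof (rule ccontr)
  assume "\<F> \<noteq> {}"
  then obtain S where "S \<in> \<F>" by blast
  with assms have "0 < dim S" and "dim S < 1" by (auto simp: sparse_family_def)
  then show False by simp
qed

lemma point_avoidance_1: "point_avoidance p 1"
  unfolding point_avoidance_def
proof (intro allI impI)
  fix U H \<F>
  assume "subspace U" and dU: "dim U = 1" and H: "hyperplane_of H U" and F: "sparse_family p U \<F>"
  have "\<not> U \<subseteq> H"
  proof
    assume "U \<subseteq> H"
    then have "dim U \<le> dim H" by (rule dim_subset)
    with H dU show False unfolding hyperplane_of_def by linarith
  qed
  then show "\<exists>x\<in>U. x \<notin> H \<and> (\<forall>S\<in>\<F>. x \<notin> S)" using sparse_family_dim_1[OF dU F] by blast
qed

lemma hyperplane_avoidance_1: "hyperplane_avoidance p 1"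
  unfolding hyperplane_avoidance_def
proof (intro allI impI)
  fix U \<F>
  assume U: "subspace U" and dU: "dim U = 1" and F: "sparse_family p U \<F>"
  have "hyperplane_of {0} U" using U dU subspace_0 by (simp add: hyperplane_of_def)
  then show "\<exists>W. hyperplane_of W U \<and> (\<forall>S\<in>\<F>. \<not> S \<subseteq> W)"
    using sparse_family_dim_1[OF dU F] by blast
qed

lemma point_avoidance_step:
  assumes field: "infinite (UNIV :: 'a set) \<or> p < card (UNIV :: 'a set)"
    and IB: "point_avoidance p n" and ID: "hyperplane_avoidance p n"
  shows "point_avoidance p (Suc n)"
  unfolding point_avoidance_def
proof (intro allI impI)
  fix U H \<F>
  assume U: "subspace U" and dU: "dim U = Suc n" and H: "hyperplane_of H U"
    and F: "sparse_family p U \<F>"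
  have Hsub: "subspace H" and dH: "dim H = n" using H dU by (auto simp: hyperplane_of_def)
  define \<F>\<^sub>2 where "\<F>\<^sub>2 = {S\<in>\<F>. \<not> S \<subseteq> H \<and> 2 \<le> dim S}"
  define \<F>\<^sub>1 where "\<F>\<^sub>1 = {S\<in>\<F>. \<not> S \<subseteq> H \<and> dim S = 1}"
  have F2: "sparse_family p U \<F>\<^sub>2" by (rule sparse_family_subset[OF F]) (auto simp: \<F>\<^sub>2_def)
  have F2H: "\<And>S. S \<in> \<F>\<^sub>2 \<Longrightarrow> \<not> S \<subseteq> H \<and> 2 \<le> dim S" by (simp add: \<F>\<^sub>2_def)
  obtain W where W: "hyperplane_of W H" and "\<forall>T\<in>(\<lambda>S. S \<inter> H) ` \<F>\<^sub>2. \<not> T \<subseteq> W"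
    using hyperplane_avoidanceD[OF ID Hsub dH sparse_family_Int_hyperplane[OF U F2 H F2H]] .
  then have F2W: "\<forall>S\<in>\<F>\<^sub>2. \<not> S \<inter> H \<subseteq> W" by simp
  have "card \<F>\<^sub>1 \<le> card {S\<in>\<F>. dim S = 1}"
    using F by (intro card_mono) (auto simp: \<F>\<^sub>1_def sparse_family_def)
  also have "\<dots> \<le> p" using F by (simp add: sparse_family_def)
  finally have card_F1: "card \<F>\<^sub>1 \<le> p" .
  have fin_F1: "finite \<F>\<^sub>1" using F by (simp add: \<F>\<^sub>1_def sparse_family_def)
  have "W \<subseteq> H" using W by (simp add: hyperplane_of_def)
  then have F1W: "\<forall>S\<in>\<F>\<^sub>1. \<not> S \<subseteq> W" by (auto simp: \<F>\<^sub>1_def)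
  obtain P where P: "hyperplane_of P U" and PH: "P \<inter> H = W" and F1P: "\<forall>S\<in>\<F>\<^sub>1. \<not> S \<subseteq> P"
    by (rule hyperplane_through_avoiding[OF field U H W fin_F1 card_F1 F1W])
  have F2P: "\<not> S \<subseteq> P \<and> 2 \<le> dim S" if S: "S \<in> \<F>\<^sub>2" for S
  proof
    show "\<not> S \<subseteq> P"
    proof
      assume "S \<subseteq> P"
      then have "S \<inter> H \<subseteq> W" using PH by blast
      with F2W S show False by blast
    qed
    show "2 \<le> dim S" using S by (simp add: \<F>\<^sub>2_def)
  qed
  have P_sub: "subspace P" "P \<subseteq> U" "dim P = n" using P dU by (auto simp: hyperplane_of_def)
  have "hyperplane_of W P" using W PH P_sub dH by (auto simp: hyperplane_of_def)
  from point_avoidanceD[OF IB P_sub(1,3) this sparse_family_Int_hyperplane[OF U F2 P F2P]]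
  obtain x where x: "x \<in> P" "x \<notin> W" and "\<forall>T\<in>(\<lambda>S. S \<inter> P) ` \<F>\<^sub>2. x \<notin> T" .
  then have x_F2: "\<forall>S\<in>\<F>\<^sub>2. x \<notin> S \<inter> P" by simp
  have xH: "x \<notin> H" using x PH by blast
  have "x \<notin> S" if S: "S \<in> \<F>" for S
  proof -
    have S_sub: "subspace S" "S \<subseteq> U" "0 < dim S" using F S by (auto simp: sparse_family_def)
    consider "S \<subseteq> H" | "S \<in> \<F>\<^sub>2" | "S \<in> \<F>\<^sub>1"
      using S S_sub(3) by (force simp: \<F>\<^sub>1_def \<F>\<^sub>2_def)
    then show ?thesis
    proof cases
      case 1
      with xH show ?thesis by blast
    next
      case 2
      with x_F2 x show ?thesis by blast
    next
      case 3
      with F1P have "\<not> S \<subseteq> P" and "dim S = 1" by (auto simp: \<F>\<^sub>1_def)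
      then have "dim (S \<inter> P) = 0" using dim_Int_hyperplane[OF U S_sub(1,2) P] by simp
      moreover have "0 \<in> W" using W subspace_0 by (auto simp: hyperplane_of_def)
      ultimately show ?thesis using x by auto
    qed
  qed
  then show "\<exists>x\<in>U. x \<notin> H \<and> (\<forall>S\<in>\<F>. x \<notin> S)" using x P_sub xH by blast
qed

lemma hyperplane_avoidance_step:
  assumes IB: "point_avoidance p (Suc n)" and ID: "hyperplane_avoidance p n"
  shows "hyperplane_avoidance p (Suc n)"
  unfolding hyperplane_avoidance_def
proof (intro allI impI)
  fix U \<F>
  assume U: "subspace U" and dU: "dim U = Suc n" and F: "sparse_family p U \<F>"
  have "{0} \<subseteq> U" using subspace_0[OF U] by blast
  then obtain H where H: "hyperplane_of H U"
    using hyperplane_exists[OF U subspace_single_0] dU by auto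
  have Hsub: "subspace H" and dH: "dim H = n" using H dU by (auto simp: hyperplane_of_def)
  obtain v where v: "v \<in> U" "v \<notin> H" and vF: "\<forall>S\<in>\<F>. v \<notin> S"
    using point_avoidanceD[OF IB U dU H F] .
  define join where "join S = span (insert v S)" for S
  define \<G> where "\<G> = {S\<in>\<F>. dim S < n}"
  have dim_join: "dim (join S) = dim S + 1" if "S \<in> \<F>" for S
    unfolding join_def using F vF that by (intro dim_span_insert) (auto simp: sparse_family_def)
  have G: "sparse_family p U (join ` \<G>)"
    unfolding join_def using sparse_family_subset[OF F, of \<G>] vF dU
    by (intro sparse_family_span_insert[OF U _ v(1)]) (auto simp: \<G>_def)
  have join_big: "\<not> T \<subseteq> H \<and> 2 \<le> dim T" if T: "T \<in> join ` \<G>" for T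
  proof -
    obtain S where S: "S \<in> \<F>" "T = join S" using T by (auto simp: \<G>_def)
    have "v \<in> T" unfolding S(2) join_def by (rule span_base) simp
    moreover have "0 < dim S" using F S(1) by (simp add: sparse_family_def)
    ultimately show ?thesis using v(2) dim_join[OF S(1)] S(2) by auto
  qed
  obtain W' where W': "hyperplane_of W' H" and "\<forall>T\<in>(\<lambda>T. T \<inter> H) ` join ` \<G>. \<not> T \<subseteq> W'"
    using hyperplane_avoidanceD[OF ID Hsub dH sparse_family_Int_hyperplane[OF U G H join_big]] .
  then have GW': "\<forall>S\<in>\<G>. \<not> join S \<inter> H \<subseteq> W'" by simp
  define W where "W = span (insert v W')"
  have W: "hyperplane_of W U" and WH: "W \<inter> H = W'"
    unfolding W_def using hyperplane_span_insert[OF U H W' v] by simp_all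
  have "\<not> S \<subseteq> W" if S: "S \<in> \<F>" for S
  proof
    assume SW: "S \<subseteq> W"
    have "v \<in> W" unfolding W_def by (rule span_base) simp
    then have "join S \<subseteq> W" unfolding join_def using SW W by (intro span_minimal) (auto simp: hyperplane_of_def)
    then have "dim S + 1 \<le> n" using dim_subset[of "join S" W] dim_join[OF S] W dU
      by (simp add: hyperplane_of_def)
    then have "S \<in> \<G>" using S by (simp add: \<G>_def)
    moreover have "join S \<inter> H \<subseteq> W'" using \<open>join S \<subseteq> W\<close> WH by blast
    ultimately show False using GW' by blast
  qed
  then show "\<exists>W. hyperplane_of W U \<and> (\<forall>S\<in>\<F>. \<not> S \<subseteq> W)" using W by blast
qed

lemma point_and_hyperplane_avoidance:
  assumes field: "infinite (UNIV :: 'a set) \<or> p < card (UNIV :: 'a set)" and "1 \<le> n"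
  shows "point_avoidance p n \<and> hyperplane_avoidance p n"
  using assms(2)
proof (induction n rule: nat_induct_at_least)
  case base
  show ?case using point_avoidance_1 hyperplane_avoidance_1 by simp
next
  case (Suc n)
  then have "point_avoidance p (Suc n)" using point_avoidance_step[OF field] by simp
  with Suc.IH show ?case using hyperplane_avoidance_step by simp
qed

lemma image_subset_if_card_eq_sum_fibres:
  assumes "finite I" and "finite K" and "card I = (\<Sum>k\<in>K. card {i\<in>I. d i = k})"
  shows "d ` I \<subseteq> K"
proof -
  have "card (\<Union>k\<in>K. {i\<in>I. d i = k}) = (\<Sum>k\<in>K. card {i\<in>I. d i = k})"
    using assms(1,2) by (intro card_UN_disjoint) auto
  then have "(\<Union>k\<in>K. {i\<in>I. d i = k}) = I"
    using assms(1,3) by (intro card_subset_eq) auto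
  then show ?thesis by blast
qed

lemma sparse_family_image:
  assumes "finite I" and "\<forall>i\<in>I. subspace (E i)"
    and "\<forall>i\<in>I. 0 < dim (E i) \<and> dim (E i) < dim (UNIV :: 'b set)"
    and "\<And>k. card {i\<in>I. dim (E i) = k} \<le> p"
  shows "sparse_family p UNIV (E ` I)"
proof -
  have le: "card {S \<in> E ` I. dim S = k} \<le> card {i\<in>I. dim (E i) = k}" for k
    by (rule card_image_filter_le[OF assms(1)]) simp
  have "card {S \<in> E ` I. dim S = k} \<le> p" for k using le[of k] assms(4)[of k] by linarith
  then show ?thesis using assms(1-3) by (auto simp: sparse_family_def)
qed

lemma UNIV_not_covered_by_subspaces:
  fixes E :: "'i \<Rightarrow> 'b set"
  assumes field: "infinite (UNIV :: 'a set) \<or> p < card (UNIV :: 'a set)" and p: "0 < p"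
    and dimE: "dim (UNIV :: 'b set) = n" and fI: "finite I" and cI: "card I = (n - 1) * p + 1"
    and sub: "\<forall>i\<in>I. subspace (E i)"
    and c1: "card {i\<in>I. dim (E i) = n - 1} = p + 1"
    and c2: "\<forall>k\<in>{1..n-2}. card {i\<in>I. dim (E i) = k} = p"
  shows "\<not> UNIV \<subseteq> (\<Union>i\<in>I. E i)"
proof -
  have n: "2 \<le> n"
  proof (rule ccontr)
    assume "\<not> 2 \<le> n"
    then have "card I = 1" using cI by simp
    moreover have "card {i\<in>I. dim (E i) = n - 1} \<le> card I" using fI by (intro card_mono) auto
    ultimately show False using c1 p by simp
  qed
  have ins: "{1..n-1} = insert (n - 1) {1..n-2}" using n by auto
  have "(\<Sum>k\<in>{1..n-1}. card {i\<in>I. dim (E i) = k})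
      = card {i\<in>I. dim (E i) = n - 1} + (\<Sum>k\<in>{1..n-2}. card {i\<in>I. dim (E i) = k})"
    unfolding ins using n by (subst sum.insert) auto
  also have "\<dots> = card I" using c1 c2 cI n by (simp add: algebra_simps diff_mult_distrib)
  finally have "(\<lambda>i. dim (E i)) ` I \<subseteq> {1..n-1}"
    by (rule image_subset_if_card_eq_sum_fibres[OF fI finite_atLeastAtMost, OF sym])
  then have dims: "\<forall>i\<in>I. 0 < dim (E i) \<and> dim (E i) < n" using n by (auto simp: image_subset_iff)
  have "{i\<in>I. dim (E i) = n - 1} \<noteq> {}" using c1 by (metis add_is_0 card.empty one_neq_zero)
  then obtain i0 where i0: "i0 \<in> I" "dim (E i0) = n - 1" by blast
  have count: "card {i\<in>I - {i0}. dim (E i) = k} \<le> p" for k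
  proof (cases "k = n - 1")
    case True
    then have "{i\<in>I - {i0}. dim (E i) = k} = {i\<in>I. dim (E i) = n - 1} - {i0}" by auto
    then show ?thesis using c1 i0 fI by simp
  next
    case False
    have "card {i\<in>I - {i0}. dim (E i) = k} \<le> card {i\<in>I. dim (E i) = k}"
      using fI by (intro card_mono) auto
    moreover have "card {i\<in>I. dim (E i) = k} \<le> p"
    proof (cases "k \<in> {1..n-2}")
      case False
      have "dim (E i) \<noteq> k" if "i \<in> I" for i
        using dims[rule_format, OF that] False \<open>k \<noteq> n - 1\<close> by auto
      then have "{i\<in>I. dim (E i) = k} = {}" by blast
      then show ?thesis by (metis card.empty le0)
    qed (use c2 in simp)
    ultimately show ?thesis by linarith
  qed
  have fam: "sparse_family p UNIV (E ` (I - {i0}))"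
    using fI sub dims dimE count by (intro sparse_family_image) auto
  have hyp: "hyperplane_of (E i0) UNIV" using sub i0 dimE n by (simp add: hyperplane_of_def)
  have "point_avoidance p n" using point_and_hyperplane_avoidance[OF field] n by simp
  from point_avoidanceD[OF this subspace_UNIV dimE hyp fam]
  obtain x where "x \<notin> E i0" and "\<forall>S\<in>E ` (I - {i0}). x \<notin> S" by blast
  then show ?thesis by blast
qed

lemma basis_avoiding_subspaces:
  fixes F :: "'j \<Rightarrow> 'b set"
  assumes field: "infinite (UNIV :: 'a set) \<or> p < card (UNIV :: 'a set)"
    and dimE: "dim (UNIV :: 'b set) = n" and fJ: "finite J" and cJ: "card J = (n - 1) * p"
    and sub: "\<forall>j\<in>J. subspace (F j)"
    and c: "\<forall>k\<in>{1..n-1}. card {j\<in>J. dim (F j) = k} = p"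
  shows "\<exists>B. independent B \<and> span B = UNIV \<and> B \<inter> (\<Union>j\<in>J. F j) = {}"
proof -
  have "card J = (\<Sum>k\<in>{1..n-1}. card {j\<in>J. dim (F j) = k})" using c cJ by simp
  then have "(\<lambda>j. dim (F j)) ` J \<subseteq> {1..n-1}"
    by (rule image_subset_if_card_eq_sum_fibres[OF fJ finite_atLeastAtMost])
  then have dims: "\<forall>j\<in>J. 0 < dim (F j) \<and> dim (F j) < n" by (auto simp: image_subset_iff)
  have "card {j\<in>J. dim (F j) = k} \<le> p" for k
  proof (cases "k \<in> {1..n-1}")
    case False
    have "dim (F j) \<noteq> k" if "j \<in> J" for j
      using dims[rule_format, OF that] False by auto
    then have "{j\<in>J. dim (F j) = k} = {}" by blast
    then show ?thesis by (metis card.empty le0)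
  qed (use c in simp)
  then have fam: "sparse_family p UNIV (F ` J)"
    using fJ sub dims dimE by (intro sparse_family_image) auto
  have "\<exists>B. independent B \<and> card B = k \<and> B \<inter> (\<Union>j\<in>J. F j) = {}" if "k \<le> n" for k
    using that
  proof (induction k)
    case 0
    show ?case by (intro exI[of _ "{}"]) (simp add: independent_empty)
  next
    case (Suc k)
    then obtain B where B: "independent B" "card B = k" "B \<inter> (\<Union>j\<in>J. F j) = {}" by auto
    have "dim (span B) < dim (UNIV :: 'b set)"
      using B Suc.prems dimE dim_span_eq_card_independent by simp
    then obtain H where H: "hyperplane_of H UNIV" and BH: "span B \<subseteq> H"
      by (rule hyperplane_exists[OF subspace_UNIV subspace_span subset_UNIV])
    have "point_avoidance p n"
      using point_and_hyperplane_avoidance[OF field] Suc.prems by simp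
    from point_avoidanceD[OF this subspace_UNIV dimE H fam]
    obtain x where "x \<notin> H" and xF: "\<forall>S\<in>F ` J. x \<notin> S" by blast
    then have x: "x \<notin> span B" using BH by blast
    then have "x \<notin> B" using span_base by blast
    have "independent (insert x B)" using x B(1) by (rule independent_insertI)
    moreover have "card (insert x B) = Suc k"
      using \<open>x \<notin> B\<close> B finiteI_independent by simp
    moreover have "insert x B \<inter> (\<Union>j\<in>J. F j) = {}" using B(3) xF by blast
    ultimately show ?case by blast
  qed
  then obtain B where B: "independent B" "card B = n" "B \<inter> (\<Union>j\<in>J. F j) = {}" by blast
  have "UNIV \<subseteq> span B" by (rule card_ge_dim_independent) (use B dimE in auto)
  then show ?thesis using B by blast
qed

end

theorem mainTheorem12:
  fixes scale :: "'k::field \<Rightarrow> 'v::ab_group_add \<Rightarrow> 'v"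
    and p n :: nat
  assumes vs: "vector_space scale"
    and fin_dim: "\<exists>S. finite S \<and> module.span scale S = UNIV"
    and dimE: "vector_space.dim scale (UNIV :: 'v set) = n"
    and p_pos: "p > 0"
    and field_size: "infinite (UNIV :: 'k set) \<or> card (UNIV :: 'k set) > p"
  shows
    "(\<forall>(I :: 'i set) (E :: 'i \<Rightarrow> 'v set).
        finite I \<and> card I = (n - 1) * p + 1
        \<and> (\<forall>i\<in>I. module.subspace scale (E i))
        \<and> card {i \<in> I. vector_space.dim scale (E i) = n - 1} = p + 1
        \<and> (\<forall>k\<in>{1..n-2}. card {i \<in> I. vector_space.dim scale (E i) = k} = p)
        \<longrightarrow> \<not> (UNIV \<subseteq> (\<Union>i\<in>I. E i)))
     \<and>
     (\<forall>(J :: 'j set) (F :: 'j \<Rightarrow> 'v set).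
        finite J \<and> card J = (n - 1) * p
        \<and> (\<forall>j\<in>J. module.subspace scale (F j))
        \<and> (\<forall>k\<in>{1..n-1}. card {j \<in> J. vector_space.dim scale (F j) = k} = p)
        \<longrightarrow> (\<exists>B. \<not> module.dependent scale B \<and> module.span scale B = UNIV
                 \<and> B \<inter> (\<Union>j\<in>J. F j) = {}))"
proof -
  interpret vector_space scale by (rule vs)
  obtain S where S: "finite S" "span S = UNIV" using fin_dim by blast
  obtain B where B: "independent B" "UNIV \<subseteq> span B" using basis_exists[of UNIV] by blast
  have "finite B" using independent_span_bound[OF S(1) B(1)] S(2) by auto
  then interpret finite_dimensional_vector_space scale B
    by unfold_locales (use B in \<open>auto simp: span_eq_iff\<close>)
  show ?thesis
  proof (intro conjI allI impI; elim conjE)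
    show "\<not> UNIV \<subseteq> (\<Union>i\<in>I. E i)"
      if "finite I" "card I = (n - 1) * p + 1" "\<forall>i\<in>I. subspace (E i)"
        "card {i \<in> I. dim (E i) = n - 1} = p + 1" "\<forall>k\<in>{1..n-2}. card {i \<in> I. dim (E i) = k} = p"
      for I :: "'i set" and E
      using UNIV_not_covered_by_subspaces[OF field_size p_pos dimE that] .
    show "\<exists>B. independent B \<and> span B = UNIV \<and> B \<inter> (\<Union>j\<in>J. F j) = {}"
      if "finite J" "card J = (n - 1) * p" "\<forall>j\<in>J. subspace (F j)"
        "\<forall>k\<in>{1..n-1}. card {j \<in> J. dim (F j) = k} = p"
      for J :: "'j set" and F
      using basis_avoiding_subspaces[OF field_size dimE that] .
  qed
qed

end
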